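(* For any $(\bar\Sigma_{\rho_0},\dots,\bar\Sigma_{\rho_{T-1}})\in\mathcal M_T$ and $(S_0,\dots,S_{T-1})\in\mathcal M_T$, $$\lim_{t\to+0}\frac{\check J(\bar\Sigma_{\rho_0}+t(S_0-\bar\Sigma_{\rho_0}),\dots,\bar\Sigma_{\rho_{T-1}}+t(S_{T-1}-\bar\Sigma_{\rho_{T-1}}))-\check J(\bar\Sigma_{\rho_0},\dots,\bar\Sigma_{\rho_{T-1}})}{t}=\sum_{k=0}^{T-1}\mathrm{Tr}\big[\check J'_k(\bar\Sigma_{\rho_0},\dots,\bar\Sigma_{\rho_{T-1}})(S_k-\bar\Sigma_{\rho_k})\big],$$ where $\check J'_k:\mathcal M_T\to\mathbb S^m$ is defined by $\check J'_k(\Sigma_{\rho_0},\dots,\Sigma_{\rho_{T-1}})=\frac\varepsilon2L_k(\Sigma_{\rho_k}+\Sigma_{Q_k}-E_k\Sigma_{x_k}E_k^\top)L_k$ with $E_k=\Sigma_{Q_k}B_k^\top\Pi_{k+1}A_k/\varepsilon$ and $L_k=(\Sigma_{Q_k}+\Sigma_{\rho_k})^{-1}\succ0$.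
   Context: Fix integers $n,m,T\ge 1$, $\varepsilon>0$, matrices $A_k\in\mathbb R^{n\times n}$, $B_k\in\mathbb R^{n\times m}$, and symmetric positive definite $R_k\in\mathbb R^{m\times m}$, $\Sigma_{w_k}\in\mathbb R^{n\times n}$ ($k=0,\dots,T-1$), $F,\Sigma_{x_{\mathrm{ini}}}\in\mathbb R^{n\times n}$. $\mathbb S^m$ = symmetric $m\times m$ matrices, $\mathbb S^m_{\succeq0}$ the PSD ones, $\mathcal M_T=(\mathbb S^m_{\succeq0})^T$; $\Sigma^{1/2}$ PSD square root, $|\cdot|$ determinant. For $(\Sigma_{\rho_0},\dots,\Sigma_{\rho_{T-1}})\in\mathcal M_T$ define backwards $\Pi_T=F$, $C_k=(R_k+B_k^\top\Pi_{k+1}B_k)/\varepsilon$, $\Pi_k=A_k^\top\Pi_{k+1}A_k-\frac1\varepsilon A_k^\top\Pi_{k+1}B_k\Sigma_{\rho_k}^{1/2}(I+\Sigma_{\rho_k}^{1/2}C_k\Sigma_{\rho_k}^{1/2})^{-1}\Sigma_{\rho_k}^{1/2}B_k^\top\Pi_{k+1}A_k$, $\Sigma_{Q_k}=\varepsilon(R_k+B_k^\top\Pi_{k+1}B_k)^{-1}$; set $\Sigma_{\pi_k}=\Sigma_{\rho_k}^{1/2}(I+\Sigma_{\rho_k}^{1/2}C_k\Sigma_{\rho_k}^{1/2})^{-1}\Sigma_{\rho_k}^{1/2}$, $P_k=-\frac1\varepsilon\Sigma_{\pi_k}B_k^\top\Pi_{k+1}A_k$, and forwards $\Sigma_{x_0}=\Sigma_{x_{\mathrm{ini}}}$,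 $\Sigma_{x_{k+1}}=(A_k+B_kP_k)\Sigma_{x_k}(A_k+B_kP_k)^\top+B_k\Sigma_{\pi_k}B_k^\top+\Sigma_{w_k}$ (state covariance under the policy $u_k\sim\mathcal N(P_kx_k,\Sigma_{\pi_k})$). Define $\check J(\Sigma_{\rho_0},\dots,\Sigma_{\rho_{T-1}})=\frac12\Big[\mathrm{Tr}(\Pi_0\Sigma_{x_{\mathrm{ini}}})+\sum_{k=0}^{T-1}\Big(\varepsilon\log\frac{|\Sigma_{\rho_k}+\Sigma_{Q_k}|}{|\Sigma_{Q_k}|}+\mathrm{Tr}(\Pi_{k+1}\Sigma_{w_k})\Big)\Big]$. *)

theory Defs
  imports "HOL-Analysis.Analysis"
begin


definition sym_mat :: "real^'n^'n \<Rightarrow> bool" where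
  "sym_mat M \<longleftrightarrow> transpose M = M"

definition psd_mat :: "real^'n^'n \<Rightarrow> bool" where
  "psd_mat M \<longleftrightarrow> sym_mat M \<and> (\<forall>x. 0 \<le> x \<bullet> (M *v x))"

definition pd_mat :: "real^'n^'n \<Rightarrow> bool" where
  "pd_mat M \<longleftrightarrow> sym_mat M \<and> (\<forall>x. x \<noteq> 0 \<longrightarrow> 0 < x \<bullet> (M *v x))"

definition psd_sqrt :: "real^'n^'n \<Rightarrow> real^'n^'n" where
  "psd_sqrt M = (THE S. psd_mat S \<and> S ** S = M)"

definition Cmat :: "real \<Rightarrow> real^'m^'n \<Rightarrow> real^'m^'m \<Rightarrow> real^'n^'n \<Rightarrow> real^'m^'m" where
  "Cmat eps Bk Rk P = (1/eps) *\<^sub>R (Rk + transpose Bk ** P ** Bk)"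

definition Sig_pi_step :: "real \<Rightarrow> real^'m^'n \<Rightarrow> real^'m^'m \<Rightarrow> real^'m^'m \<Rightarrow> real^'n^'n \<Rightarrow> real^'m^'m" where
  "Sig_pi_step eps Bk Rk Sk P =
     psd_sqrt Sk ** matrix_inv (mat 1 + psd_sqrt Sk ** Cmat eps Bk Rk P ** psd_sqrt Sk) ** psd_sqrt Sk"

text \<open>Pi_k from Pi_{k+1} = P.\<close>
definition Pi_step :: "real \<Rightarrow> real^'n^'n \<Rightarrow> real^'m^'n \<Rightarrow> real^'m^'m \<Rightarrow> real^'m^'m \<Rightarrow> real^'n^'n \<Rightarrow> real^'n^'n" where
  "Pi_step eps Ak Bk Rk Sk P =
     transpose Ak ** P ** Ak
     - (1/eps) *\<^sub>R (transpose Ak ** P ** Bk ** Sig_pi_step eps Bk Rk Sk P ** transpose Bk ** P ** Ak)"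

text \<open>Backward recursion: Pi_rev j = Pi_{T-j}.\<close>
fun Pi_rev :: "real \<Rightarrow> (nat \<Rightarrow> real^'n^'n) \<Rightarrow> (nat \<Rightarrow> real^'m^'n) \<Rightarrow> (nat \<Rightarrow> real^'m^'m)
    \<Rightarrow> real^'n^'n \<Rightarrow> nat \<Rightarrow> (nat \<Rightarrow> real^'m^'m) \<Rightarrow> nat \<Rightarrow> real^'n^'n" where
  "Pi_rev eps A B R F T S 0 = F"
| "Pi_rev eps A B R F T S (Suc j) =
     (let k = T - Suc j in Pi_step eps (A k) (B k) (R k) (S k) (Pi_rev eps A B R F T S j))"

definition Pi :: "real \<Rightarrow> (nat \<Rightarrow> real^'n^'n) \<Rightarrow> (nat \<Rightarrow> real^'m^'n) \<Rightarrow> (nat \<Rightarrow> real^'m^'m)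
    \<Rightarrow> real^'n^'n \<Rightarrow> nat \<Rightarrow> (nat \<Rightarrow> real^'m^'m) \<Rightarrow> nat \<Rightarrow> real^'n^'n" where
  "Pi eps A B R F T S k = Pi_rev eps A B R F T S (T - k)"

definition Sig_Q :: "real \<Rightarrow> (nat \<Rightarrow> real^'n^'n) \<Rightarrow> (nat \<Rightarrow> real^'m^'n) \<Rightarrow> (nat \<Rightarrow> real^'m^'m)
    \<Rightarrow> real^'n^'n \<Rightarrow> nat \<Rightarrow> (nat \<Rightarrow> real^'m^'m) \<Rightarrow> nat \<Rightarrow> real^'m^'m" where
  "Sig_Q eps A B R F T S k =
     eps *\<^sub>R matrix_inv (R k + transpose (B k) ** Pi eps A B R F T S (Suc k) ** B k)"

definition Sig_pi :: "real \<Rightarrow> (nat \<Rightarrow> real^'n^'n) \<Rightarrow> (nat \<Rightarrow> real^'m^'n) \<Rightarrow> (nat \<Rightarrow> real^'m^'m)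
    \<Rightarrow> real^'n^'n \<Rightarrow> nat \<Rightarrow> (nat \<Rightarrow> real^'m^'m) \<Rightarrow> nat \<Rightarrow> real^'m^'m" where
  "Sig_pi eps A B R F T S k = Sig_pi_step eps (B k) (R k) (S k) (Pi eps A B R F T S (Suc k))"

definition Pgain :: "real \<Rightarrow> (nat \<Rightarrow> real^'n^'n) \<Rightarrow> (nat \<Rightarrow> real^'m^'n) \<Rightarrow> (nat \<Rightarrow> real^'m^'m)
    \<Rightarrow> real^'n^'n \<Rightarrow> nat \<Rightarrow> (nat \<Rightarrow> real^'m^'m) \<Rightarrow> nat \<Rightarrow> real^'n^'m" where
  "Pgain eps A B R F T S k =
     - (1/eps) *\<^sub>R (Sig_pi eps A B R F T S k ** transpose (B k) ** Pi eps A B R F T S (Suc k) ** A k)"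

fun Sig_x :: "real \<Rightarrow> (nat \<Rightarrow> real^'n^'n) \<Rightarrow> (nat \<Rightarrow> real^'m^'n) \<Rightarrow> (nat \<Rightarrow> real^'m^'m)
    \<Rightarrow> real^'n^'n \<Rightarrow> (nat \<Rightarrow> real^'n^'n) \<Rightarrow> real^'n^'n \<Rightarrow> nat \<Rightarrow> (nat \<Rightarrow> real^'m^'m) \<Rightarrow> nat \<Rightarrow> real^'n^'n" where
  "Sig_x eps A B R F Sw Xini T S 0 = Xini"
| "Sig_x eps A B R F Sw Xini T S (Suc k) =
     (let M = A k + B k ** Pgain eps A B R F T S k in
        M ** Sig_x eps A B R F Sw Xini T S k ** transpose M
        + B k ** Sig_pi eps A B R F T S k ** transpose (B k) + Sw k)"

definition Jcheck :: "real \<Rightarrow> (nat \<Rightarrow> real^'n^'n) \<Rightarrow> (nat \<Rightarrow> real^'m^'n) \<Rightarrow> (nat \<Rightarrow> real^'m^'m)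
    \<Rightarrow> real^'n^'n \<Rightarrow> (nat \<Rightarrow> real^'n^'n) \<Rightarrow> real^'n^'n \<Rightarrow> nat \<Rightarrow> (nat \<Rightarrow> real^'m^'m) \<Rightarrow> real" where
  "Jcheck eps A B R F Sw Xini T S =
     (1/2) * (trace (Pi eps A B R F T S 0 ** Xini)
       + (\<Sum>k<T. eps * ln (det (S k + Sig_Q eps A B R F T S k) / det (Sig_Q eps A B R F T S k))
                 + trace (Pi eps A B R F T S (Suc k) ** Sw k)))"

definition Jprime :: "real \<Rightarrow> (nat \<Rightarrow> real^'n^'n) \<Rightarrow> (nat \<Rightarrow> real^'m^'n) \<Rightarrow> (nat \<Rightarrow> real^'m^'m)
    \<Rightarrow> real^'n^'n \<Rightarrow> (nat \<Rightarrow> real^'n^'n) \<Rightarrow> real^'n^'n \<Rightarrow> nat \<Rightarrow> (nat \<Rightarrow> real^'m^'m) \<Rightarrow> nat \<Rightarrow> real^'m^'m" where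
  "Jprime eps A B R F Sw Xini T S k =
     (let SQ = Sig_Q eps A B R F T S k;
          E = (1/eps) *\<^sub>R (SQ ** transpose (B k) ** Pi eps A B R F T S (Suc k) ** A k);
          L = matrix_inv (SQ + S k)
      in (eps/2) *\<^sub>R (L ** (S k + SQ - E ** Sig_x eps A B R F Sw Xini T S k ** transpose E) ** L))"

end

theory Submission
  imports Defs
begin

text \<open>Everything is differentiated along the segment \<open>t \<mapsto> Sbar + t (S - Sbar)\<close> at \<open>t = 0\<close>
  within \<open>[0,1]\<close>; the one-sided difference quotient of the statement is this derivative.
  Writing \<open>\<Sigma>\<^sub>\<pi> = \<Sigma>\<^sub>Q - \<Sigma>\<^sub>Q L \<Sigma>\<^sub>Q\<close> with \<open>L = (\<Sigma>\<^sub>Q + \<Sigma>\<^sub>\<rho>)\<^sup>-\<^sup>1\<close> removes the square root, so all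
  quantities are rational in \<open>t\<close>. Differentiating the backward Riccati step with
  \<open>d(X\<^sup>-\<^sup>1) = -X\<^sup>-\<^sup>1 dX X\<^sup>-\<^sup>1\<close> gives the Lyapunov recursion
  \<open>d\<Pi>\<^sub>k = M\<^sub>k\<^sup>T d\<Pi>\<^sub>k\<^sub>+\<^sub>1 M\<^sub>k - \<epsilon> E\<^sub>k\<^sup>T L\<^sub>k D\<^sub>k L\<^sub>k E\<^sub>k\<close> for the closed-loop matrix \<open>M\<^sub>k = A\<^sub>k + B\<^sub>k P\<^sub>k\<close>
  and \<open>D\<^sub>k = S\<^sub>k - Sbar\<^sub>k\<close>. The log-determinants are differentiated by Jacobi's formula, and
  \<open>tr (d\<Pi>\<^sub>0 \<Sigma>\<^sub>x\<^sub>0)\<close> telescopes along the forward covariance recursion: all terms containing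
  \<open>d\<Pi>\<close> cancel, leaving \<open>\<epsilon>/2 tr (L\<^sub>k D\<^sub>k - L\<^sub>k E\<^sub>k \<Sigma>\<^sub>x\<^sub>k E\<^sub>k\<^sup>T L\<^sub>k D\<^sub>k)\<close> for each \<open>k\<close>.\<close>

section \<open>Matrix algebra\<close>

lemma matrix_add_rdistrib: "((A::'a::semiring_1^'n^'m) + B) ** C = A ** C + B ** C"
  by (vector matrix_matrix_mult_def sum.distrib[symmetric] algebra_simps)

lemma matrix_diff_ldistrib: "(A::'a::ring_1^'n^'m) ** (B - C) = A ** B - A ** C"
  by (vector matrix_matrix_mult_def sum_subtractf[symmetric] algebra_simps)

lemma matrix_diff_rdistrib: "((A::'a::ring_1^'n^'m) - B) ** C = A ** C - B ** C"
  by (vector matrix_matrix_mult_def sum_subtractf[symmetric] algebra_simps)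

lemma matrix_neg_left: "(- (A::'a::ring_1^'n^'m)) ** B = - (A ** B)"
  by (vector matrix_matrix_mult_def sum_negf[symmetric])

lemma matrix_neg_right: "(A::'a::ring_1^'n^'m) ** (- B) = - (A ** B)"
  by (vector matrix_matrix_mult_def sum_negf[symmetric])

lemma matrix_scaleR_left: "(c *\<^sub>R (A::real^'n^'m)) ** B = c *\<^sub>R (A ** B)"
  by (rule scalar_matrix_assoc[symmetric])

lemma matrix_scaleR_right: "(A::real^'n^'m) ** (c *\<^sub>R B) = c *\<^sub>R (A ** B)"
  by (simp add: matrix_scalar_ac scalar_matrix_assoc)

lemma transpose_add: "transpose (A + B) = transpose A + transpose (B::'a::semiring_1^'n^'m)"
  by (vector transpose_def)

lemma transpose_diff: "transpose (A - B) = transpose A - transpose (B::'a::ring_1^'n^'m)"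
  by (vector transpose_def)

lemma transpose_neg: "transpose (- A) = - transpose (A::'a::ring_1^'n^'m)"
  by (vector transpose_def)

lemma transpose_zero [simp]: "transpose (0::'a::semiring_1^'n^'m) = 0"
  by (vector transpose_def)

lemma trace_zero [simp]: "trace (0::'a::semiring_1^'n^'n) = 0"
  by (simp add: trace_def)

lemma trace_neg: "trace (- A) = - trace (A::'a::ring_1^'n^'n)"
  by (simp add: trace_def sum_negf)

lemma trace_scaleR: "trace (c *\<^sub>R A) = c * trace (A::real^'n^'n)"
  by (simp add: trace_def sum_distrib_left)

lemmas matrix_ring_simps = matrix_add_ldistrib matrix_add_rdistrib matrix_diff_ldistrib
  matrix_diff_rdistrib matrix_neg_left matrix_neg_right matrix_scaleR_left matrix_scaleR_right
  transpose_add transpose_diff transpose_neg transpose_scalar matrix_transpose_mul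

lemma matrix_inv_left:
  fixes A :: "real^'n^'n"
  assumes "invertible A" shows "matrix_inv A ** A = mat 1"
  using assms unfolding invertible_def matrix_inv_def by (rule someI2_ex) auto

lemma matrix_inv_right:
  fixes A :: "real^'n^'n"
  assumes "invertible A" shows "A ** matrix_inv A = mat 1"
  using assms unfolding invertible_def matrix_inv_def by (rule someI2_ex) auto

lemma matrix_inv_unique:
  fixes A B :: "real^'n^'n"
  assumes "A ** B = mat 1" shows "matrix_inv A = B"
proof -
  have "invertible A" using assms invertible_right_inverse by blast
  then have "matrix_inv A = matrix_inv A ** (A ** B)" using assms by simp
  also have "\<dots> = B" by (simp add: matrix_mul_assoc matrix_inv_left \<open>invertible A\<close>)
  finally show ?thesis .
qed

lemma matrix_mult3_entry:
  "((X::real^'n^'m) ** (Y::real^'p^'n) ** (Z::real^'q^'p)) $ i $ j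
    = (\<Sum>a\<in>UNIV. \<Sum>b\<in>UNIV. X $ i $ a * Y $ a $ b * Z $ b $ j)"
  by (simp add: matrix_matrix_mult_def sum_distrib_right) (rule sum.swap)

lemma matrix_inv_diff:
  fixes A B :: "real^'n^'n"
  assumes A: "invertible A" and B: "invertible B"
  shows "matrix_inv B - matrix_inv A = matrix_inv B ** (A - B) ** matrix_inv A"
  using matrix_inv_left[OF B] matrix_inv_right[OF A]
  by (simp add: matrix_diff_ldistrib matrix_diff_rdistrib matrix_mul_assoc[symmetric])

lemma matrix_inv_transpose:
  fixes A :: "real^'n^'n"
  assumes "invertible A" shows "transpose (matrix_inv A) = matrix_inv (transpose A)"
  by (metis assms matrix_inv_left matrix_inv_unique matrix_transpose_mul transpose_mat)

section \<open>Positive (semi)definite matrices\<close>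

lemma inner_congruence:
  fixes X :: "real^'a^'b" and A :: "real^'b^'b"
  shows "x \<bullet> ((transpose X ** A ** X) *v x) = (X *v x) \<bullet> (A *v (X *v x))"
proof -
  have "x \<bullet> (transpose X *v y) = (X *v x) \<bullet> y" for y
    by (metis dot_lmul_matrix inner_commute transpose_matrix_vector)
  then show ?thesis by (simp add: matrix_vector_mul_assoc[symmetric] matrix_mul_assoc[symmetric])
qed

lemma inner_symmetric_matrix:
  fixes M :: "real^'n^'n"
  assumes "transpose M = M" shows "x \<bullet> (M *v y) = (M *v x) \<bullet> y"
  by (metis assms dot_lmul_matrix inner_commute vector_transpose_matrix)

lemma psd_symmetric: "psd_mat M \<Longrightarrow> transpose M = M"
  by (simp add: psd_mat_def sym_mat_def)

lemma pd_symmetric: "pd_mat M \<Longrightarrow> transpose M = M"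
  by (simp add: pd_mat_def sym_mat_def)

lemma pd_imp_psd: "pd_mat A \<Longrightarrow> psd_mat A"
  unfolding pd_mat_def psd_mat_def by (metis inner_zero_left less_le matrix_vector_mult_0_right order_refl)

lemma pd_mat_one: "pd_mat (mat 1 :: real^'n^'n)"
  by (simp add: pd_mat_def sym_mat_def)

lemma psd_add: "psd_mat A \<Longrightarrow> psd_mat B \<Longrightarrow> psd_mat (A + B)"
  by (simp add: psd_mat_def sym_mat_def transpose_add matrix_vector_mult_add_rdistrib inner_add_right)

lemma pd_add_psd: "pd_mat A \<Longrightarrow> psd_mat B \<Longrightarrow> pd_mat (A + B)"
  by (simp add: pd_mat_def psd_mat_def sym_mat_def transpose_add matrix_vector_mult_add_rdistrib
      inner_add_right add_pos_nonneg)

lemma psd_add_pd: "psd_mat A \<Longrightarrow> pd_mat B \<Longrightarrow> pd_mat (A + B)"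
  using pd_add_psd[of B A] by (simp add: add.commute)

lemma psd_scaleR: "psd_mat A \<Longrightarrow> 0 \<le> c \<Longrightarrow> psd_mat (c *\<^sub>R A)"
  by (simp add: psd_mat_def sym_mat_def transpose_scalar scaleR_matrix_vector_assoc[symmetric])

lemma pd_scaleR: "pd_mat A \<Longrightarrow> 0 < c \<Longrightarrow> pd_mat (c *\<^sub>R A)"
  by (simp add: pd_mat_def sym_mat_def transpose_scalar scaleR_matrix_vector_assoc[symmetric])

lemma psd_congruence:
  fixes X :: "real^'a^'b" and A :: "real^'b^'b"
  shows "psd_mat A \<Longrightarrow> psd_mat (transpose X ** A ** X)"
  unfolding psd_mat_def sym_mat_def by (simp add: inner_congruence matrix_transpose_mul matrix_mul_assoc)

lemma pd_invertible:
  fixes M :: "real^'n^'n"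
  assumes "pd_mat M" shows "invertible M"
proof -
  have "\<forall>x. M *v x = 0 \<longrightarrow> x = 0"
    using assms unfolding pd_mat_def by (metis inner_zero_right less_irrefl)
  then show ?thesis using matrix_left_invertible_ker invertible_left_inverse by blast
qed

lemma pd_matrix_inv:
  fixes M :: "real^'n^'n"
  assumes pd: "pd_mat M" shows "pd_mat (matrix_inv M)"
proof -
  have inv: "invertible M" by (rule pd_invertible[OF pd])
  have "0 < x \<bullet> (matrix_inv M *v x)" if "x \<noteq> 0" for x
  proof -
    let ?y = "matrix_inv M *v x"
    have x: "x = M *v ?y" by (simp add: matrix_vector_mul_assoc matrix_inv_right[OF inv])
    have "?y \<noteq> 0" using x that by auto
    then have "0 < ?y \<bullet> (M *v ?y)" using pd by (simp add: pd_mat_def)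
    then show ?thesis using x by (metis inner_commute)
  qed
  moreover have "transpose (matrix_inv M) = matrix_inv M"
    using matrix_inv_transpose[OF inv] pd_symmetric[OF pd] by simp
  ultimately show ?thesis by (simp add: pd_mat_def sym_mat_def)
qed

section \<open>Square roots of positive semidefinite matrices\<close>

lemma eq_zero_if_linear_le_quadratic:
  fixes a c :: real
  assumes "\<And>s. 2 * s * a \<le> s * s * c"
  shows "a = 0"
proof (rule ccontr)
  assume "a \<noteq> 0"
  define d where "d = \<bar>c\<bar> + 1"
  have d: "d > 0" by (simp add: d_def)
  have "2 * (a / d) * a \<le> (a / d) * (a / d) * c" by (rule assms)
  then have "(a * a) * (2 * d) \<le> (a * a) * c"
    using d by (simp add: field_simps)
  moreover have "a * a > 0" using \<open>a \<noteq> 0\<close> not_real_square_gt_zero by blast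
  ultimately have "2 * d \<le> c" using mult_le_cancel_left_pos by blast
  then show False by (simp add: d_def)
qed

lemma rayleigh_maximizer_orthogonal:
  fixes M :: "real^'n^'n"
  assumes sym: "transpose M = M" and V: "subspace V" and v: "v \<in> V" "norm v = 1"
    and max: "\<And>y. y \<in> V \<Longrightarrow> norm y = 1 \<Longrightarrow> y \<bullet> (M *v y) \<le> v \<bullet> (M *v v)"
    and w: "w \<in> V" "w \<bullet> v = 0"
  shows "w \<bullet> (M *v v) = 0"
proof (rule eq_zero_if_linear_le_quadratic)
  fix s :: real
  define l where "l = v \<bullet> (M *v v)"
  define y where "y = v + s *\<^sub>R w"
  have vv: "v \<bullet> v = 1" using v(2) by (simp add: norm_eq_1)
  have yy: "y \<bullet> y = 1 + s * s * (w \<bullet> w)"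
    using vv w(2) by (simp add: y_def inner_add_left inner_add_right inner_commute)
  then have "norm y > 0" by (simp add: norm_eq_sqrt_inner add_pos_nonneg)
  have "y \<in> V" using V v(1) w(1) by (simp add: y_def subspace_add subspace_scale)
  then have "y /\<^sub>R norm y \<in> V" using V by (simp add: subspace_scale)
  moreover have "norm (y /\<^sub>R norm y) = 1" using \<open>norm y > 0\<close> by simp
  ultimately have "(y /\<^sub>R norm y) \<bullet> (M *v (y /\<^sub>R norm y)) \<le> l"
    unfolding l_def by (rule max)
  also have "(y /\<^sub>R norm y) \<bullet> (M *v (y /\<^sub>R norm y)) = (y \<bullet> (M *v y)) / (y \<bullet> y)"
    by (simp add: matrix_vector_mult_scaleR divide_inverse mult_ac power2_norm_eq_inner[symmetric]
        power2_eq_square)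
  finally have "y \<bullet> (M *v y) \<le> l * (y \<bullet> y)"
    using yy by (simp add: divide_le_eq add_pos_nonneg)
  moreover have "y \<bullet> (M *v y) = l + 2 * s * (w \<bullet> (M *v v)) + s * s * (w \<bullet> (M *v w))"
    using inner_symmetric_matrix[OF sym, of v w]
    by (simp add: y_def l_def matrix_vector_right_distrib matrix_vector_mult_scaleR
        inner_add_left inner_add_right inner_commute algebra_simps)
  ultimately show "2 * s * (w \<bullet> (M *v v)) \<le> s * s * (l * (w \<bullet> w) - w \<bullet> (M *v w))"
    using yy by (simp add: algebra_simps)
qed

text \<open>The orthogonal complement of a set of eigenvectors is \<open>M\<close>-invariant, so a maximiser of the
  Rayleigh quotient on its unit sphere is again an eigenvector.\<close>

lemma symmetric_matrix_eigenvector_orthogonal: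
  fixes M :: "real^'n^'n" and B :: "(real^'n) set"
  assumes sym: "transpose M = M" and "finite B" "card B < CARD('n)"
    and eig: "\<forall>b\<in>B. \<exists>l. M *v b = l *\<^sub>R b"
  shows "\<exists>v. norm v = 1 \<and> (\<forall>b\<in>B. b \<bullet> v = 0) \<and> (\<exists>l. M *v v = l *\<^sub>R v)"
proof -
  define V where "V = {x::real^'n. \<forall>b\<in>B. b \<bullet> x = 0}"
  have V: "subspace V"
    using subspace_orthogonal_to_vectors[of B] by (simp add: V_def orthogonal_def)
  have "dim B < DIM(real^'n)" using dim_le_card'[OF \<open>finite B\<close>] assms(3) by simp
  then obtain x :: "real^'n" where x: "x \<noteq> 0" "\<And>y. y \<in> span B \<Longrightarrow> orthogonal x y"
    using orthogonal_to_subspace_exists by blast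
  have "x /\<^sub>R norm x \<in> V \<inter> sphere 0 1"
    using x(2)[OF span_base] x(1) by (auto simp: V_def orthogonal_def inner_commute)
  moreover have "compact (V \<inter> sphere 0 1)"
  proof -
    have "V \<inter> sphere 0 1 = sphere 0 1 \<inter> (\<Inter>b\<in>B. {x. b \<bullet> x = 0})" by (auto simp: V_def)
    then show ?thesis by (simp add: compact_Int_closed closed_INT closed_hyperplane)
  qed
  ultimately obtain v where v: "v \<in> V" "norm v = 1"
    and max: "\<And>y. y \<in> V \<inter> sphere 0 1 \<Longrightarrow> y \<bullet> (M *v y) \<le> v \<bullet> (M *v v)"
    using continuous_attains_sup[of "V \<inter> sphere 0 1" "\<lambda>x. x \<bullet> (M *v x)"]
    by (fastforce intro: continuous_intros)
  define l where "l = v \<bullet> (M *v v)"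
  have "b \<bullet> (M *v v) = 0" if "b \<in> B" for b
  proof -
    obtain lb where "M *v b = lb *\<^sub>R b" using eig \<open>b \<in> B\<close> by blast
    then show ?thesis
      using inner_symmetric_matrix[OF sym, of b v] v(1) \<open>b \<in> B\<close> by (simp add: V_def)
  qed
  then have "M *v v \<in> V" by (simp add: V_def)
  define w where "w = M *v v - l *\<^sub>R v"
  have "w \<in> V" using V \<open>M *v v \<in> V\<close> v(1) by (simp add: w_def subspace_diff subspace_scale)
  moreover have vv: "v \<bullet> v = 1" using v(2) by (simp add: norm_eq_1)
  then have wv: "w \<bullet> v = 0" by (simp add: w_def l_def inner_diff_left inner_diff_right inner_commute)
  ultimately have "w \<bullet> (M *v v) = 0"
    using rayleigh_maximizer_orthogonal[OF sym V v] max by auto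
  then have "w \<bullet> w = 0" using wv by (simp add: w_def inner_diff_right)
  then have "M *v v = l *\<^sub>R v" by (simp add: w_def)
  then show ?thesis using v V_def by blast
qed

lemma symmetric_matrix_orthonormal_eigenbasis:
  fixes M :: "real^'n^'n"
  assumes sym: "transpose M = M"
  obtains B where "finite B" "pairwise orthogonal B" "\<And>b. b \<in> B \<Longrightarrow> norm b = 1"
    "\<And>b. b \<in> B \<Longrightarrow> \<exists>l. M *v b = l *\<^sub>R b" "span B = UNIV"
proof -
  let ?good = "\<lambda>B. finite B \<and> pairwise orthogonal B \<and> (\<forall>b\<in>B. norm b = 1)
                   \<and> (\<forall>b\<in>B. \<exists>l. M *v b = l *\<^sub>R b)"
  have "\<exists>B. ?good B \<and> card B = k" if "k \<le> CARD('n)" for k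
    using that
  proof (induction k)
    case 0
    show ?case by (intro exI[of _ "{}"]) auto
  next
    case (Suc k)
    then obtain B where B: "?good B" "card B = k" by auto
    then obtain v where v: "norm v = 1" "\<forall>b\<in>B. b \<bullet> v = 0" "\<exists>l. M *v v = l *\<^sub>R v"
      using symmetric_matrix_eigenvector_orthogonal[OF sym, of B] Suc.prems by auto
    then have "v \<notin> B" by (auto simp: norm_eq_1)
    then have "?good (insert v B) \<and> card (insert v B) = Suc k"
      using B v by (auto simp: pairwise_insert orthogonal_def inner_commute)
    then show ?case by blast
  qed
  then obtain B where B: "?good B" "card B = CARD('n)" by blast
  then have "independent B"
    by (intro pairwise_orthogonal_independent) auto
  then have "span B = UNIV"
    using card_eq_dim[of B UNIV] B by (auto simp: dim_UNIV)
  then show ?thesis using B that by blast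
qed

definition outer_prod :: "real^'n \<Rightarrow> real^'n^'n" where
  "outer_prod u = (\<chi> i j. u $ i * u $ j)"

lemma outer_prod_mult_vector: "outer_prod u *v x = (u \<bullet> x) *\<^sub>R u"
  by (simp add: outer_prod_def matrix_vector_mult_def inner_vec_def vec_eq_iff sum_distrib_left
      sum_distrib_right mult_ac)

lemma sum_matrix_vector_mult: "(\<Sum>b\<in>B. f b :: real^'n^'n) *v x = (\<Sum>b\<in>B. f b *v x)"
  by (induction B rule: infinite_finite_induct) (auto simp: matrix_vector_mult_add_rdistrib)

lemma transpose_sum: "transpose (\<Sum>b\<in>B. f b :: real^'n^'n) = (\<Sum>b\<in>B. transpose (f b))"
  by (induction B rule: infinite_finite_induct) (auto simp: transpose_add)

lemma psd_eigenvector_of_square: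
  fixes K :: "real^'n^'n"
  assumes K: "psd_mat K" and b: "K *v (K *v b) = (s * s) *\<^sub>R b" and s: "0 \<le> s"
  shows "K *v b = s *\<^sub>R b"
proof -
  define y where "y = K *v b - s *\<^sub>R b"
  have "K *v y + s *\<^sub>R y = 0"
    using b by (simp add: y_def matrix_vector_mult_diff_distrib matrix_vector_mult_scaleR algebra_simps)
  then have "y \<bullet> (K *v y) + s * (y \<bullet> y) = 0"
    by (metis inner_add_right inner_scaleR_right inner_zero_right)
  moreover have "y \<bullet> (K *v y) \<ge> 0" using K by (simp add: psd_mat_def)
  ultimately have "s * (y \<bullet> y) = 0" "y \<bullet> (K *v y) = 0"
    using s by (smt (verit) inner_ge_zero mult_nonneg_nonneg)+
  moreover have "(K *v b) \<bullet> (K *v b) = b \<bullet> (K *v (K *v b))"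
    using inner_symmetric_matrix[OF psd_symmetric[OF K]] by metis
  ultimately show ?thesis using b by (cases "s = 0") (auto simp: y_def)
qed

lemma psd_sqrt_unique_exists:
  fixes M :: "real^'n^'n"
  assumes psd: "psd_mat M"
  shows "\<exists>!H. psd_mat H \<and> H ** H = M"
proof -
  obtain B where fin: "finite B" and orth: "pairwise orthogonal B" and unit: "\<And>b. b \<in> B \<Longrightarrow> norm b = 1"
    and eig: "\<And>b. b \<in> B \<Longrightarrow> \<exists>l. M *v b = l *\<^sub>R b" and span: "span B = UNIV"
    using symmetric_matrix_orthonormal_eigenbasis[OF psd_symmetric[OF psd]] by blast
  have inner_B: "b \<bullet> c = (if b = c then 1 else 0)" if "b \<in> B" "c \<in> B" for b c
    using orth unit[OF that(1)] that by (auto simp: pairwise_def orthogonal_def norm_eq_1)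
  have eq_on_B: "K1 = K2" if "\<And>b. b \<in> B \<Longrightarrow> K1 *v b = K2 *v b" for K1 K2 :: "real^'n^'n"
    using linear_eq_on_span[OF matrix_vector_mul_linear matrix_vector_mul_linear, of B K1 K2] that span
    by (auto simp: matrix_eq)
  define lam where "lam b = b \<bullet> (M *v b)" for b
  have Mb: "M *v b = lam b *\<^sub>R b" if "b \<in> B" for b
    using eig[OF that] inner_B[OF that that] by (auto simp: lam_def)
  have lam_nonneg: "lam b \<ge> 0" for b using psd by (simp add: lam_def psd_mat_def)
  define H where "H = (\<Sum>b\<in>B. sqrt (lam b) *\<^sub>R outer_prod b)"
  have Hx: "H *v x = (\<Sum>b\<in>B. (sqrt (lam b) * (b \<bullet> x)) *\<^sub>R b)" for x
    by (simp add: H_def sum_matrix_vector_mult outer_prod_mult_vector scaleR_matrix_vector_assoc[symmetric])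
  have Hb: "H *v c = sqrt (lam c) *\<^sub>R c" if "c \<in> B" for c
  proof -
    have "H *v c = (\<Sum>b\<in>B. if b = c then sqrt (lam c) *\<^sub>R c else 0)"
      unfolding Hx using inner_B that by (intro sum.cong) auto
    then show ?thesis using fin that by simp
  qed
  have "transpose H = H"
    unfolding H_def
    by (simp add: transpose_sum transpose_scalar outer_prod_def transpose_def vec_eq_iff mult.commute)
  moreover have "0 \<le> x \<bullet> (H *v x)" for x
  proof -
    have "x \<bullet> (H *v x) = (\<Sum>b\<in>B. sqrt (lam b) * (b \<bullet> x)\<^sup>2)"
      unfolding Hx by (simp add: inner_sum_right inner_commute power2_eq_square mult_ac)
    then show ?thesis by (simp add: sum_nonneg lam_nonneg)
  qed
  ultimately have "psd_mat H" by (simp add: psd_mat_def sym_mat_def)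
  moreover have "H ** H = M"
    by (rule eq_on_B) (simp add: matrix_vector_mul_assoc[symmetric] Hb Mb matrix_vector_mult_scaleR lam_nonneg)
  moreover have "K = H" if K: "psd_mat K" "K ** K = M" for K
  proof (rule eq_on_B)
    fix b assume "b \<in> B"
    then have "K *v (K *v b) = (sqrt (lam b) * sqrt (lam b)) *\<^sub>R b"
      using K(2) Mb lam_nonneg by (simp add: matrix_vector_mul_assoc)
    from psd_eigenvector_of_square[OF K(1) this] show "K *v b = H *v b"
      using Hb \<open>b \<in> B\<close> by (simp add: lam_nonneg)
  qed
  ultimately show ?thesis by blast
qed

lemma psd_sqrt:
  fixes M :: "real^'n^'n"
  assumes "psd_mat M"
  shows "psd_mat (psd_sqrt M)" and "psd_sqrt M ** psd_sqrt M = M"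
  using theI'[OF psd_sqrt_unique_exists[OF assms]] by (simp_all add: psd_sqrt_def)

lemma pd_det_pos:
  fixes M :: "real^'n^'n"
  assumes "pd_mat M"
  shows "det M > 0"
proof -
  have "det M = det (psd_sqrt M) ^ 2"
    by (metis psd_sqrt(2)[OF pd_imp_psd[OF assms]] det_mul power2_eq_square)
  moreover have "det M \<noteq> 0" using pd_invertible[OF assms] invertible_det_nz by blast
  ultimately show ?thesis by simp
qed

section \<open>Entrywise derivatives of matrix-valued functions\<close>

definition has_matrix_derivative :: "(real \<Rightarrow> real^'a^'b) \<Rightarrow> real^'a^'b \<Rightarrow> real filter \<Rightarrow> bool"
    (infix \<open>has'_matrix'_derivative\<close> 50)
  where "(f has_matrix_derivative D) F \<longleftrightarrow> (\<forall>i j. ((\<lambda>t. f t $ i $ j) has_real_derivative D $ i $ j) F)"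

lemma has_matrix_derivativeD:
  "(f has_matrix_derivative D) F \<Longrightarrow> ((\<lambda>t. f t $ i $ j) has_real_derivative D $ i $ j) F"
  by (simp add: has_matrix_derivative_def)

lemma has_matrix_derivative_const: "((\<lambda>t. C) has_matrix_derivative 0) F"
  by (simp add: has_matrix_derivative_def)

lemma has_matrix_derivative_segment: "((\<lambda>t. A + t *\<^sub>R D) has_matrix_derivative D) (at x within S)"
  unfolding has_matrix_derivative_def by (auto intro!: derivative_eq_intros)

lemma has_matrix_derivative_add:
  "(f has_matrix_derivative F) (at x within S) \<Longrightarrow> (g has_matrix_derivative G) (at x within S) \<Longrightarrow>
    ((\<lambda>t. f t + g t) has_matrix_derivative F + G) (at x within S)"
  unfolding has_matrix_derivative_def by (auto intro!: derivative_eq_intros)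

lemma has_matrix_derivative_diff:
  "(f has_matrix_derivative F) (at x within S) \<Longrightarrow> (g has_matrix_derivative G) (at x within S) \<Longrightarrow>
    ((\<lambda>t. f t - g t) has_matrix_derivative F - G) (at x within S)"
  unfolding has_matrix_derivative_def by (auto intro!: derivative_eq_intros)

lemma has_matrix_derivative_scaleR:
  "(f has_matrix_derivative F) (at x within S) \<Longrightarrow>
    ((\<lambda>t. c *\<^sub>R f t) has_matrix_derivative c *\<^sub>R F) (at x within S)"
  unfolding has_matrix_derivative_def by (auto intro!: derivative_eq_intros)

lemma has_matrix_derivative_mult:
  fixes f :: "real \<Rightarrow> real^'a^'b" and g :: "real \<Rightarrow> real^'c^'a"
  assumes "(f has_matrix_derivative F) (at x within S)" "(g has_matrix_derivative G) (at x within S)"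
  shows "((\<lambda>t. f t ** g t) has_matrix_derivative F ** g x + f x ** G) (at x within S)"
  unfolding has_matrix_derivative_def
proof (intro allI)
  fix i j
  have "((\<lambda>t. \<Sum>k\<in>UNIV. f t $ i $ k * g t $ k $ j) has_real_derivative
        (\<Sum>k\<in>UNIV. F $ i $ k * g x $ k $ j + G $ k $ j * f x $ i $ k)) (at x within S)"
    by (intro DERIV_sum DERIV_mult has_matrix_derivativeD assms)
  then show "((\<lambda>t. (f t ** g t) $ i $ j) has_real_derivative (F ** g x + f x ** G) $ i $ j) (at x within S)"
    by (simp add: matrix_matrix_mult_def sum.distrib mult.commute)
qed

lemma has_matrix_derivative_mult_left:
  "(g has_matrix_derivative G) (at x within S) \<Longrightarrow>
    ((\<lambda>t. C ** g t) has_matrix_derivative C ** G) (at x within S)"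
  using has_matrix_derivative_mult[OF has_matrix_derivative_const[of C]] by simp

lemma has_matrix_derivative_mult_right:
  "(f has_matrix_derivative F) (at x within S) \<Longrightarrow>
    ((\<lambda>t. f t ** C) has_matrix_derivative F ** C) (at x within S)"
  using has_matrix_derivative_mult[OF _ has_matrix_derivative_const[of C]] by simp

lemma has_matrix_derivative_transform_within:
  assumes "(f has_matrix_derivative D) (at x within S)" "x \<in> S" "\<And>t. t \<in> S \<Longrightarrow> f t = g t"
  shows "(g has_matrix_derivative D) (at x within S)"
  unfolding has_matrix_derivative_def
  using has_field_derivative_transform_within[OF has_matrix_derivativeD[OF assms(1)] zero_less_one assms(2)]
    assms(3) by auto

lemma has_real_derivative_trace:
  "(f has_matrix_derivative D) F \<Longrightarrow> ((\<lambda>t. trace (f t)) has_real_derivative trace D) F"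
  unfolding trace_def by (intro DERIV_sum has_matrix_derivativeD)

lemma tendsto_det:
  fixes f :: "'a \<Rightarrow> real^'n^'n"
  assumes "\<And>i j. ((\<lambda>t. f t $ i $ j) \<longlongrightarrow> A $ i $ j) F"
  shows "((\<lambda>t. det (f t)) \<longlongrightarrow> det A) F"
  unfolding det_def by (intro tendsto_intros assms)

lemma matrix_inv_entry:
  fixes A :: "real^'n^'n"
  assumes "invertible A"
  shows "matrix_inv A $ k $ j = det (\<chi> i l. if l = k then axis j 1 $ i else A $ i $ l) / det A"
proof -
  have "A *v (matrix_inv A *v axis j 1) = axis j 1"
    by (simp add: matrix_vector_mul_assoc matrix_inv_right[OF assms])
  then have "matrix_inv A *v axis j 1 = (\<chi> k. det (\<chi> i l. if l = k then axis j 1 $ i else A $ i $ l) / det A)"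
    using cramer[of A] assms invertible_det_nz by blast
  moreover have "(matrix_inv A *v axis j 1) $ k = matrix_inv A $ k $ j"
    by (simp add: matrix_vector_mult_def axis_def if_distrib cong: if_cong)
  ultimately show ?thesis by simp
qed

lemma tendsto_matrix_inv_entry:
  fixes f :: "real \<Rightarrow> real^'n^'n"
  assumes f: "\<And>i j. ((\<lambda>t. f t $ i $ j) \<longlongrightarrow> f x $ i $ j) (at x within S)"
    and inv: "\<And>t. t \<in> S \<Longrightarrow> invertible (f t)" and "x \<in> S"
  shows "((\<lambda>t. matrix_inv (f t) $ k $ j) \<longlongrightarrow> matrix_inv (f x) $ k $ j) (at x within S)"
proof -
  define g where "g t = (\<chi> i l. if l = k then axis j 1 $ i else f t $ i $ l)" for t
  have "((\<lambda>t. det (g t) / det (f t)) \<longlongrightarrow> det (g x) / det (f x)) (at x within S)"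
    using inv[OF \<open>x \<in> S\<close>] invertible_det_nz[of "f x"]
    by (intro tendsto_divide tendsto_det) (auto simp: g_def f)
  moreover have "eventually (\<lambda>t. det (g t) / det (f t) = matrix_inv (f t) $ k $ j) (at x within S)"
    by (auto simp: eventually_at_filter g_def matrix_inv_entry inv)
  ultimately show ?thesis
    using matrix_inv_entry[OF inv[OF \<open>x \<in> S\<close>]] by (simp add: g_def tendsto_cong)
qed

text \<open>The entries of the inverse are continuous by Cramer's rule, and then
  \<open>N t - N x = N t (f x - f t) N x\<close> with \<open>N = matrix_inv \<circ> f\<close> gives the derivative.\<close>

lemma has_matrix_derivative_matrix_inv:
  fixes f :: "real \<Rightarrow> real^'n^'n"
  assumes f: "(f has_matrix_derivative D) (at x within S)"
    and inv: "\<And>t. t \<in> S \<Longrightarrow> invertible (f t)" and "x \<in> S"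
  shows "((\<lambda>t. matrix_inv (f t)) has_matrix_derivative
            - (matrix_inv (f x) ** D ** matrix_inv (f x))) (at x within S)"
  unfolding has_matrix_derivative_def
proof (intro allI)
  fix i j
  define N where "N t = matrix_inv (f t)" for t
  have N: "((\<lambda>t. N t $ a $ b) \<longlongrightarrow> N x $ a $ b) (at x within S)" for a b
    unfolding N_def
    using DERIV_continuous[OF has_matrix_derivativeD[OF f]] inv \<open>x \<in> S\<close>
    by (intro tendsto_matrix_inv_entry) (auto simp: continuous_within)
  have quot: "((\<lambda>t. (f t $ a $ b - f x $ a $ b) / (t - x)) \<longlongrightarrow> D $ a $ b) (at x within S)" for a b
    using has_matrix_derivativeD[OF f, of a b] by (simp add: has_field_derivative_iff)
  have diff: "(N t $ i $ j - N x $ i $ j) / (t - x) =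
     - (\<Sum>a\<in>UNIV. \<Sum>b\<in>UNIV. N t $ i $ a * ((f t $ a $ b - f x $ a $ b) / (t - x)) * N x $ b $ j)"
    if "t \<in> S" for t
  proof -
    have "N t - N x = - (N t ** (f t - f x) ** N x)"
      using matrix_inv_diff[OF inv[OF \<open>x \<in> S\<close>] inv[OF that]]
      by (simp add: N_def matrix_diff_ldistrib matrix_diff_rdistrib)
    then have "N t $ i $ j - N x $ i $ j = - (N t ** (f t - f x) ** N x) $ i $ j"
      by (metis vector_minus_component vector_uminus_component)
    also have "\<dots> = - (\<Sum>a\<in>UNIV. \<Sum>b\<in>UNIV. N t $ i $ a * (f t $ a $ b - f x $ a $ b) * N x $ b $ j)"
      by (simp add: matrix_mult3_entry)
    finally show ?thesis by (simp add: sum_divide_distrib)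
  qed
  have "((\<lambda>t. - (\<Sum>a\<in>UNIV. \<Sum>b\<in>UNIV. N t $ i $ a * ((f t $ a $ b - f x $ a $ b) / (t - x)) * N x $ b $ j))
      \<longlongrightarrow> - (\<Sum>a\<in>UNIV. \<Sum>b\<in>UNIV. N x $ i $ a * D $ a $ b * N x $ b $ j)) (at x within S)"
    by (intro tendsto_intros N quot)
  moreover have "eventually (\<lambda>t. - (\<Sum>a\<in>UNIV. \<Sum>b\<in>UNIV. N t $ i $ a * ((f t $ a $ b - f x $ a $ b) / (t - x)) * N x $ b $ j)
      = (N t $ i $ j - N x $ i $ j) / (t - x)) (at x within S)"
    by (auto simp: eventually_at_filter diff)
  ultimately show "((\<lambda>t. matrix_inv (f t) $ i $ j) has_real_derivative
      (- (matrix_inv (f x) ** D ** matrix_inv (f x))) $ i $ j) (at x within S)"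
    by (simp add: has_field_derivative_iff N_def tendsto_cong matrix_mult3_entry)
qed

lemma has_field_derivative_prod_within:
  assumes "\<And>i. i \<in> I \<Longrightarrow> (f i has_field_derivative f' i) (at x within S)"
  shows "((\<lambda>u. \<Prod>i\<in>I. f i u) has_field_derivative (\<Sum>i\<in>I. f' i * (\<Prod>j\<in>I - {i}. f j x))) (at x within S)"
proof -
  have "((\<lambda>u. \<Prod>i\<in>I. f i u) has_derivative (\<lambda>y. \<Sum>i\<in>I. f' i * y * (\<Prod>j\<in>I - {i}. f j x)))
      (at x within S)"
    using assms by (intro has_derivative_prod) (simp add: has_field_derivative_def)
  then show ?thesis
    by (rule has_derivative_imp_has_field_derivative) (simp add: sum_distrib_left mult_ac)
qed

lemma has_real_derivative_det_at_identity:
  fixes g :: "real \<Rightarrow> real^'n^'n"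
  assumes g: "(g has_matrix_derivative G) (at x within S)" and gx: "g x = mat 1"
  shows "((\<lambda>t. det (g t)) has_real_derivative trace G) (at x within S)"
proof -
  let ?P = "{p. p permutes (UNIV :: 'n set)}"
  define d where "d p = (\<Sum>i\<in>UNIV. G $ i $ p i * (\<Prod>j\<in>UNIV - {i}. g x $ j $ p j))" for p :: "'n \<Rightarrow> 'n"
  have "((\<lambda>t. \<Sum>p\<in>?P. of_int (sign p) * (\<Prod>i\<in>UNIV. g t $ i $ p i)) has_real_derivative
         (\<Sum>p\<in>?P. of_int (sign p) * d p)) (at x within S)"
    unfolding d_def by (intro DERIV_sum DERIV_cmult has_field_derivative_prod_within has_matrix_derivativeD[OF g])
  moreover have "d p = 0" if "p permutes UNIV" "p \<noteq> id" for p
  proof -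
    obtain a where "p a \<noteq> a" using \<open>p \<noteq> id\<close> by (metis eq_id_iff)
    then have "p (p a) \<noteq> p a" using permutes_inj[OF that(1)] by (metis injD)
    have z: "(\<Prod>j\<in>UNIV - {i}. g x $ j $ p j) = 0" for i
      using \<open>p a \<noteq> a\<close> \<open>p (p a) \<noteq> p a\<close>
      by (intro prod_zero bexI[of _ "if a = i then p a else a"]) (auto simp: gx mat_def)
    show ?thesis unfolding d_def by (simp only: z mult_zero_right sum.neutral_const)
  qed
  then have "(\<Sum>p\<in>?P. of_int (sign p) * d p) = (\<Sum>p\<in>?P. if p = id then trace G else 0)"
    by (intro sum.cong) (auto simp: d_def gx sign_id trace_def mat_def)
  ultimately show ?thesis by (simp add: det_def permutes_id)
qed

text \<open>Jacobi's formula, reduced to the identity by \<open>det (f t) = det (f x) * det (f x\<^sup>-\<^sup>1 f t)\<close>.\<close>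

lemma has_real_derivative_ln_det:
  fixes f :: "real \<Rightarrow> real^'n^'n"
  assumes f: "(f has_matrix_derivative D) (at x within S)" and pos: "det (f x) > 0"
  shows "((\<lambda>t. ln (det (f t))) has_real_derivative trace (matrix_inv (f x) ** D)) (at x within S)"
proof -
  have inv: "invertible (f x)" using pos invertible_det_nz by force
  define N where "N = matrix_inv (f x)"
  have det_f: "det (f t) = det (f x) * det (N ** f t)" for t
  proof -
    have "f x ** (N ** f t) = f t" by (simp add: N_def matrix_mul_assoc matrix_inv_right[OF inv])
    then show ?thesis by (metis det_mul)
  qed
  have Nfx: "N ** f x = mat 1" by (simp add: N_def matrix_inv_left[OF inv])
  have "((\<lambda>t. det (N ** f t)) has_real_derivative trace (N ** D)) (at x within S)"
    by (intro has_real_derivative_det_at_identity has_matrix_derivative_mult_left f Nfx)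
  then have "((\<lambda>t. ln (det (f x) * det (N ** f t))) has_real_derivative
      inverse (det (f x) * det (N ** f x)) * (det (f x) * trace (N ** D))) (at x within S)"
    using pos Nfx by (intro DERIV_chain2[OF DERIV_ln] DERIV_cmult) simp_all
  moreover have "inverse (det (f x) * det (N ** f x)) * (det (f x) * trace (N ** D)) = trace (N ** D)"
    using pos Nfx by simp
  ultimately have "((\<lambda>t. ln (det (f t))) has_real_derivative trace (N ** D)) (at x within S)"
    by (simp only: det_f[symmetric])
  then show ?thesis by (simp add: N_def)
qed

section \<open>The Riccati recursion\<close>

definition Sig_Q_step :: "real \<Rightarrow> real^'m^'n \<Rightarrow> real^'m^'m \<Rightarrow> real^'n^'n \<Rightarrow> real^'m^'m" where
  "Sig_Q_step eps Bk Rk P = eps *\<^sub>R matrix_inv (Rk + transpose Bk ** P ** Bk)"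

lemma pd_add_psd_congruence:
  fixes Bk :: "real^'m^'n"
  shows "pd_mat Rk \<Longrightarrow> psd_mat P \<Longrightarrow> pd_mat (Rk + transpose Bk ** P ** Bk)"
  by (intro pd_add_psd psd_congruence)

lemma pd_Sig_Q_step: "eps > 0 \<Longrightarrow> pd_mat Rk \<Longrightarrow> psd_mat P \<Longrightarrow> pd_mat (Sig_Q_step eps Bk Rk P)"
  unfolding Sig_Q_step_def by (intro pd_scaleR pd_matrix_inv pd_add_psd_congruence)

lemma Cmat_mult_Sig_Q_step:
  assumes "eps > 0" "pd_mat Rk" "psd_mat P"
  shows "Cmat eps Bk Rk P ** Sig_Q_step eps Bk Rk P = mat 1"
  using assms matrix_inv_right[OF pd_invertible[OF pd_add_psd_congruence[of Rk P Bk]]]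
  by (simp add: Cmat_def Sig_Q_step_def matrix_scaleR_left matrix_scaleR_right)

text \<open>With \<open>H = S\<^sup>1\<^sup>/\<^sup>2\<close> and \<open>C = SQ\<^sup>-\<^sup>1\<close> one has \<open>(I + H C H) H L SQ = H C (SQ + S) L SQ = H\<close>,
  so the inverse in the definition of \<open>\<Sigma>\<^sub>\<pi>\<close> can be pushed through \<open>H\<close>.\<close>

lemma Sig_pi_step_eq:
  fixes Bk :: "real^'m^'n" and Rk S :: "real^'m^'m" and P :: "real^'n^'n"
  assumes eps: "eps > 0" and R: "pd_mat Rk" and P: "psd_mat P" and S: "psd_mat S"
  defines "SQ \<equiv> Sig_Q_step eps Bk Rk P"
  defines "L \<equiv> matrix_inv (SQ + S)"
  shows "Sig_pi_step eps Bk Rk S P = SQ - SQ ** L ** SQ"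
proof -
  define H where "H = psd_sqrt S"
  define C where "C = Cmat eps Bk Rk P"
  have HH: "H ** H = S" and H: "transpose H = H"
    using psd_sqrt[OF S] psd_symmetric by (auto simp: H_def)
  have CSQ: "C ** SQ = mat 1"
    unfolding C_def SQ_def by (rule Cmat_mult_Sig_Q_step[OF eps R P])
  have "pd_mat (SQ + S)" unfolding SQ_def by (intro pd_add_psd pd_Sig_Q_step eps R P S)
  then have NL: "(SQ + S) ** L = mat 1" unfolding L_def by (intro matrix_inv_right pd_invertible)
  have "psd_mat C"
    using pd_imp_psd[OF pd_add_psd_congruence[OF R P, of Bk]] eps by (simp add: C_def Cmat_def psd_scaleR)
  then have "pd_mat (mat 1 + H ** C ** H)"
    using psd_congruence[of C H] H by (intro pd_add_psd pd_mat_one) auto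
  then have Z: "invertible (mat 1 + H ** C ** H)" by (rule pd_invertible)
  have "(mat 1 + H ** C ** H) ** (H ** L ** SQ) = H ** (C ** ((SQ + S) ** L)) ** SQ"
    by (simp add: matrix_ring_simps matrix_mul_assoc HH[symmetric] CSQ)
  also have "\<dots> = H" by (simp add: NL CSQ matrix_mul_assoc[symmetric])
  finally have "matrix_inv (mat 1 + H ** C ** H) ** H = H ** L ** SQ"
    by (metis matrix_inv_left[OF Z] matrix_mul_assoc matrix_mul_lid)
  then have "Sig_pi_step eps Bk Rk S P = H ** (H ** L ** SQ)"
    by (simp add: Sig_pi_step_def H_def[symmetric] C_def[symmetric] flip: matrix_mul_assoc)
  also have "\<dots> = S ** L ** SQ" by (simp add: matrix_mul_assoc HH)
  also have "\<dots> = (SQ + S) ** L ** SQ - SQ ** L ** SQ" by (simp add: matrix_ring_simps)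
  finally show ?thesis by (simp add: NL)
qed

text \<open>With \<open>W = G\<^sup>-\<^sup>1 B\<^sup>T P\<close> and \<open>G = R + B\<^sup>T P B\<close>, the matrix equals \<open>(I - B W)\<^sup>T P (I - B W) + W\<^sup>T R W\<close>.\<close>

lemma psd_riccati_update:
  fixes Bk :: "real^'m^'n" and Rk :: "real^'m^'m" and P :: "real^'n^'n"
  assumes R: "pd_mat Rk" and P: "psd_mat P"
  shows "psd_mat (P - P ** Bk ** matrix_inv (Rk + transpose Bk ** P ** Bk) ** transpose Bk ** P)"
proof -
  define G where "G = Rk + transpose Bk ** P ** Bk"
  define Gi where "Gi = matrix_inv G"
  define W where "W = Gi ** transpose Bk ** P"
  have G: "pd_mat G" unfolding G_def using R P by (rule pd_add_psd_congruence)
  have GiGGi: "Gi ** G ** Gi = Gi"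
    unfolding Gi_def using matrix_inv_left[OF pd_invertible[OF G]] by simp
  have Gi: "transpose Gi = Gi" unfolding Gi_def by (rule pd_symmetric[OF pd_matrix_inv[OF G]])
  have Psym: "transpose P = P" by (rule psd_symmetric[OF P])
  have "transpose W ** G ** W = P ** Bk ** (Gi ** G ** Gi) ** transpose Bk ** P"
    by (simp add: W_def matrix_ring_simps matrix_mul_assoc Psym Gi)
  also have "\<dots> = P ** Bk ** W" by (simp add: GiGGi W_def matrix_mul_assoc)
  finally have WGW: "transpose W ** G ** W = P ** Bk ** W" .
  have WBP: "transpose W ** transpose Bk ** P = P ** Bk ** W"
    by (simp add: W_def matrix_transpose_mul matrix_mul_assoc Psym Gi)
  have "transpose (mat 1 - Bk ** W) ** P ** (mat 1 - Bk ** W) + transpose W ** Rk ** W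
      = P - P ** Bk ** W - transpose W ** transpose Bk ** P + transpose W ** G ** W"
    by (simp add: G_def matrix_ring_simps matrix_mul_assoc Psym algebra_simps)
  also have "\<dots> = P - P ** Bk ** W" by (simp add: WGW WBP)
  also have "\<dots> = P - P ** Bk ** Gi ** transpose Bk ** P" by (simp add: W_def matrix_mul_assoc)
  finally show ?thesis
    using psd_add[OF psd_congruence[OF P, of "mat 1 - Bk ** W"] psd_congruence[OF pd_imp_psd[OF R], of W]]
    by (simp add: G_def Gi_def)
qed

lemma psd_Pi_step:
  fixes Ak :: "real^'n^'n" and Bk :: "real^'m^'n" and Rk Sk :: "real^'m^'m" and P :: "real^'n^'n"
  assumes eps: "eps > 0" and S: "psd_mat Sk" and P: "psd_mat P" and R: "pd_mat Rk"
  shows "psd_mat (Pi_step eps Ak Bk Rk Sk P)"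
proof -
  define Gi where "Gi = matrix_inv (Rk + transpose Bk ** P ** Bk)"
  define L where "L = matrix_inv (eps *\<^sub>R Gi + Sk)"
  define W where "W = Gi ** transpose Bk ** P"
  have G: "pd_mat Gi" unfolding Gi_def using R P by (intro pd_matrix_inv pd_add_psd_congruence)
  have "pd_mat (eps *\<^sub>R Gi + Sk)" using pd_scaleR[OF G eps] S by (rule pd_add_psd)
  then have "psd_mat (eps *\<^sub>R (transpose W ** L ** W))"
    unfolding L_def using eps by (intro psd_scaleR psd_congruence pd_imp_psd pd_matrix_inv) auto
  then have inner: "psd_mat (P - P ** Bk ** Gi ** transpose Bk ** P + eps *\<^sub>R (transpose W ** L ** W))"
    unfolding Gi_def by (intro psd_add psd_riccati_update R P)
  have Sg: "Sig_pi_step eps Bk Rk Sk P = eps *\<^sub>R Gi - (eps * eps) *\<^sub>R (Gi ** L ** Gi)"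
    using Sig_pi_step_eq[OF eps R P S] by (simp add: Sig_Q_step_def Gi_def L_def matrix_ring_simps)
  have "Pi_step eps Ak Bk Rk Sk P = transpose Ak ** (P - P ** Bk ** Gi ** transpose Bk ** P
      + eps *\<^sub>R (transpose W ** L ** W)) ** Ak"
    unfolding Pi_step_def Sg using eps pd_symmetric[OF G] psd_symmetric[OF P]
    by (simp add: W_def matrix_ring_simps matrix_mul_assoc algebra_simps)
  then show ?thesis using psd_congruence[OF inner] by simp
qed

lemma has_matrix_derivative_Sig_Q_step:
  fixes Bk :: "real^'m^'n" and P :: "real \<Rightarrow> real^'n^'n"
  assumes eps: "eps > 0" and R: "pd_mat Rk" and P: "\<And>t. t \<in> U \<Longrightarrow> psd_mat (P t)" "x \<in> U"
    and dP: "(P has_matrix_derivative dP) (at x within U)"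
  defines "SQ \<equiv> Sig_Q_step eps Bk Rk (P x)"
  shows "((\<lambda>t. Sig_Q_step eps Bk Rk (P t)) has_matrix_derivative
            - (1/eps) *\<^sub>R (SQ ** (transpose Bk ** dP ** Bk) ** SQ)) (at x within U)"
proof -
  define G where "G t = Rk + transpose Bk ** P t ** Bk" for t
  have "(G has_matrix_derivative 0 + transpose Bk ** dP ** Bk) (at x within U)"
    unfolding G_def
    by (intro has_matrix_derivative_add has_matrix_derivative_const has_matrix_derivative_mult_right
        has_matrix_derivative_mult_left dP)
  then have dG: "(G has_matrix_derivative transpose Bk ** dP ** Bk) (at x within U)" by simp
  have "invertible (G t)" if "t \<in> U" for t
    unfolding G_def using R P(1)[OF that] by (intro pd_invertible pd_add_psd_congruence)
  from has_matrix_derivative_matrix_inv[OF dG this \<open>x \<in> U\<close>]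
  have "((\<lambda>t. eps *\<^sub>R matrix_inv (G t)) has_matrix_derivative
      eps *\<^sub>R - (matrix_inv (G x) ** (transpose Bk ** dP ** Bk) ** matrix_inv (G x))) (at x within U)"
    by (rule has_matrix_derivative_scaleR)
  then show ?thesis
    using eps by (simp add: Sig_Q_step_def SQ_def G_def matrix_ring_simps)
qed

lemma Sig_pi_derivative_identity:
  fixes SQ L dSQ dS dG :: "real^'m^'m"
  assumes "dSQ = - (1/eps) *\<^sub>R (SQ ** dG ** SQ)"
  shows "dSQ - ((dSQ ** L + SQ ** (- (L ** (dSQ + dS) ** L))) ** SQ + SQ ** L ** dSQ)
       = - (1/eps) *\<^sub>R ((SQ - SQ ** L ** SQ) ** dG ** (SQ - SQ ** L ** SQ)) + SQ ** L ** dS ** L ** SQ"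
proof -
  have "dSQ - ((dSQ ** L + SQ ** (- (L ** (dSQ + dS) ** L))) ** SQ + SQ ** L ** dSQ)
      = (mat 1 - SQ ** L) ** dSQ ** (mat 1 - L ** SQ) + SQ ** L ** dS ** L ** SQ"
    by (simp add: matrix_ring_simps matrix_mul_assoc algebra_simps)
  also have "(mat 1 - SQ ** L) ** dSQ ** (mat 1 - L ** SQ)
      = - (1/eps) *\<^sub>R ((SQ - SQ ** L ** SQ) ** dG ** (SQ - SQ ** L ** SQ))"
    by (simp add: assms matrix_ring_simps matrix_mul_assoc algebra_simps)
  finally show ?thesis .
qed

lemma has_matrix_derivative_Sig_pi_step:
  fixes Bk :: "real^'m^'n" and P :: "real \<Rightarrow> real^'n^'n" and S :: "real \<Rightarrow> real^'m^'m"
  assumes eps: "eps > 0" and R: "pd_mat Rk"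
    and psd: "\<And>t. t \<in> U \<Longrightarrow> psd_mat (P t)" "\<And>t. t \<in> U \<Longrightarrow> psd_mat (S t)" and "x \<in> U"
    and dP: "(P has_matrix_derivative dP) (at x within U)"
    and dS: "(S has_matrix_derivative dS) (at x within U)"
  defines "SQ \<equiv> Sig_Q_step eps Bk Rk (P x)"
  defines "L \<equiv> matrix_inv (SQ + S x)"
  shows "((\<lambda>t. Sig_pi_step eps Bk Rk (S t) (P t)) has_matrix_derivative
            - (1/eps) *\<^sub>R ((SQ - SQ ** L ** SQ) ** (transpose Bk ** dP ** Bk) ** (SQ - SQ ** L ** SQ))
            + SQ ** L ** dS ** L ** SQ) (at x within U)"
proof -
  define SQf where "SQf t = Sig_Q_step eps Bk Rk (P t)" for t
  define dSQ where "dSQ = - (1/eps) *\<^sub>R (SQ ** (transpose Bk ** dP ** Bk) ** SQ)"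
  have SQx: "SQf x = SQ" by (simp add: SQf_def SQ_def)
  have Lx: "matrix_inv (SQ + S x) = L" by (simp add: L_def)
  have dSQf: "(SQf has_matrix_derivative dSQ) (at x within U)"
    unfolding SQf_def dSQ_def SQ_def using eps R psd(1) \<open>x \<in> U\<close> dP
    by (rule has_matrix_derivative_Sig_Q_step)
  have "invertible (SQf t + S t)" if "t \<in> U" for t
    unfolding SQf_def using eps R psd(1,2)[OF that] by (intro pd_invertible pd_add_psd pd_Sig_Q_step)
  from has_matrix_derivative_matrix_inv[OF has_matrix_derivative_add[OF dSQf dS] this \<open>x \<in> U\<close>]
  have dL: "((\<lambda>t. matrix_inv (SQf t + S t)) has_matrix_derivative - (L ** (dSQ + dS) ** L)) (at x within U)"
    unfolding SQx Lx .
  have deriv: "((\<lambda>t. SQf t - SQf t ** matrix_inv (SQf t + S t) ** SQf t) has_matrix_derivative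
      dSQ - ((dSQ ** L + SQ ** (- (L ** (dSQ + dS) ** L))) ** SQ + SQ ** L ** dSQ)) (at x within U)"
    using has_matrix_derivative_diff[OF dSQf
        has_matrix_derivative_mult[OF has_matrix_derivative_mult[OF dSQf dL] dSQf]]
    unfolding SQx Lx .
  have eq: "SQf t - SQf t ** matrix_inv (SQf t + S t) ** SQf t = Sig_pi_step eps Bk Rk (S t) (P t)"
    if "t \<in> U" for t
    unfolding SQf_def using Sig_pi_step_eq[OF eps R psd(1,2)[OF that]] by simp
  show ?thesis
    using has_matrix_derivative_transform_within[OF deriv \<open>x \<in> U\<close> eq]
    unfolding Sig_pi_derivative_identity[OF dSQ_def] .
qed

lemma Pi_step_derivative_identity:
  fixes A P dP :: "real^'n^'n" and B :: "real^'m^'n" and Sg dSg SQ L dS :: "real^'m^'m"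
  assumes "transpose P = P" "transpose Sg = Sg" "transpose SQ = SQ" "transpose L = L" "eps \<noteq> 0"
    and "dSg = - (1/eps) *\<^sub>R (Sg ** (transpose B ** dP ** B) ** Sg) + SQ ** L ** dS ** L ** SQ"
  defines "M \<equiv> A + B ** (- (1/eps) *\<^sub>R (Sg ** transpose B ** P ** A))"
  defines "E \<equiv> (1/eps) *\<^sub>R (SQ ** transpose B ** P ** A)"
  shows "transpose A ** dP ** A - (1/eps) *\<^sub>R
           (transpose A ** dP ** B ** Sg ** transpose B ** P ** A
            + transpose A ** P ** B ** dSg ** transpose B ** P ** A
            + transpose A ** P ** B ** Sg ** transpose B ** dP ** A)
       = transpose M ** dP ** M - eps *\<^sub>R (transpose E ** L ** dS ** L ** E)"
  unfolding assms(6) M_def E_def using assms(1-5)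
  by (simp add: matrix_ring_simps matrix_mul_assoc algebra_simps)

lemma has_matrix_derivative_Pi_step:
  fixes Ak :: "real^'n^'n" and Bk :: "real^'m^'n" and P :: "real \<Rightarrow> real^'n^'n"
    and S :: "real \<Rightarrow> real^'m^'m"
  assumes eps: "eps > 0" and R: "pd_mat Rk"
    and psd: "\<And>t. t \<in> U \<Longrightarrow> psd_mat (P t)" "\<And>t. t \<in> U \<Longrightarrow> psd_mat (S t)" and "x \<in> U"
    and dP: "(P has_matrix_derivative dP) (at x within U)"
    and dS: "(S has_matrix_derivative dS) (at x within U)"
  defines "SQ \<equiv> Sig_Q_step eps Bk Rk (P x)"
  defines "L \<equiv> matrix_inv (SQ + S x)"
  defines "M \<equiv> Ak + Bk ** (- (1/eps) *\<^sub>R (Sig_pi_step eps Bk Rk (S x) (P x) ** transpose Bk ** P x ** Ak))"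
  defines "E \<equiv> (1/eps) *\<^sub>R (SQ ** transpose Bk ** P x ** Ak)"
  shows "((\<lambda>t. Pi_step eps Ak Bk Rk (S t) (P t)) has_matrix_derivative
            transpose M ** dP ** M - eps *\<^sub>R (transpose E ** L ** dS ** L ** E)) (at x within U)"
proof -
  define Sg where "Sg = Sig_pi_step eps Bk Rk (S x) (P x)"
  define dSg where "dSg = - (1/eps) *\<^sub>R (Sg ** (transpose Bk ** dP ** Bk) ** Sg) + SQ ** L ** dS ** L ** SQ"
  have Sg: "Sg = SQ - SQ ** L ** SQ"
    unfolding Sg_def SQ_def L_def using eps R psd \<open>x \<in> U\<close> by (intro Sig_pi_step_eq) auto
  have dSgf: "((\<lambda>t. Sig_pi_step eps Bk Rk (S t) (P t)) has_matrix_derivative dSg) (at x within U)"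
    unfolding dSg_def Sg SQ_def L_def using eps R psd \<open>x \<in> U\<close> dP dS
    by (rule has_matrix_derivative_Sig_pi_step)
  have SQ: "pd_mat SQ" unfolding SQ_def using eps R psd \<open>x \<in> U\<close> by (intro pd_Sig_Q_step) auto
  have L: "pd_mat L" unfolding L_def using SQ psd(2) \<open>x \<in> U\<close> by (intro pd_matrix_inv pd_add_psd) auto
  have "((\<lambda>t. Pi_step eps Ak Bk Rk (S t) (P t)) has_matrix_derivative
      transpose Ak ** dP ** Ak - (1/eps) *\<^sub>R
           (transpose Ak ** dP ** Bk ** Sg ** transpose Bk ** P x ** Ak
            + transpose Ak ** P x ** Bk ** dSg ** transpose Bk ** P x ** Ak
            + transpose Ak ** P x ** Bk ** Sg ** transpose Bk ** dP ** Ak)) (at x within U)"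
    unfolding Pi_step_def Sg_def
    using has_matrix_derivative_diff[OF
        has_matrix_derivative_mult_right[OF has_matrix_derivative_mult_left[OF dP]]
        has_matrix_derivative_scaleR[OF has_matrix_derivative_mult_right[OF has_matrix_derivative_mult[OF
          has_matrix_derivative_mult_right[OF has_matrix_derivative_mult[OF
            has_matrix_derivative_mult_right[OF has_matrix_derivative_mult_left[OF dP]] dSgf]] dP]]]]
    by (simp add: matrix_ring_simps matrix_mul_assoc algebra_simps)
  also have "transpose Ak ** dP ** Ak - (1/eps) *\<^sub>R
           (transpose Ak ** dP ** Bk ** Sg ** transpose Bk ** P x ** Ak
            + transpose Ak ** P x ** Bk ** dSg ** transpose Bk ** P x ** Ak
            + transpose Ak ** P x ** Bk ** Sg ** transpose Bk ** dP ** Ak)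
      = transpose M ** dP ** M - eps *\<^sub>R (transpose E ** L ** dS ** L ** E)"
    unfolding M_def E_def Sg_def[symmetric]
    using psd \<open>x \<in> U\<close> SQ L eps dSg_def
    by (intro Pi_step_derivative_identity)
      (auto simp: psd_symmetric pd_symmetric Sg transpose_diff matrix_transpose_mul matrix_mul_assoc)
  finally show ?thesis .
qed

lemma Pi_T: "Pi eps A B R F T S T = F"
  by (simp add: Pi_def)

lemma Pi_Suc:
  assumes "k < T"
  shows "Pi eps A B R F T S k = Pi_step eps (A k) (B k) (R k) (S k) (Pi eps A B R F T S (Suc k))"
proof -
  have "T - k = Suc (T - Suc k)" "T - Suc (T - Suc k) = k" using assms by simp_all
  then show ?thesis by (simp add: Pi_def Let_def)
qed

lemma psd_Pi:
  assumes "eps > 0" "\<And>k. k < T \<Longrightarrow> pd_mat (R k)" "\<And>k. k < T \<Longrightarrow> psd_mat (S k)" "psd_mat F"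
  shows "k \<le> T \<Longrightarrow> psd_mat (Pi eps A B R F T S k)"
proof (induction k rule: inc_induct)
  case base
  show ?case using assms(4) by (simp add: Pi_T)
next
  case (step k)
  then show ?case using assms by (simp add: Pi_Suc psd_Pi_step)
qed

lemma Sig_Q_eq_Sig_Q_step: "Sig_Q eps A B R F T S k = Sig_Q_step eps (B k) (R k) (Pi eps A B R F T S (Suc k))"
  by (simp add: Sig_Q_def Sig_Q_step_def)

section \<open>Derivative of the cost along a segment\<close>

locale lq_segment =
  fixes eps :: real and A :: "nat \<Rightarrow> real^'n^'n" and B :: "nat \<Rightarrow> real^'m^'n"
    and R :: "nat \<Rightarrow> real^'m^'m" and F :: "real^'n^'n" and T :: nat
    and Sw :: "nat \<Rightarrow> real^'n^'n" and Xini :: "real^'n^'n"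
    and Sbar S :: "nat \<Rightarrow> real^'m^'m"
  assumes eps: "eps > 0" and R: "\<And>k. k < T \<Longrightarrow> pd_mat (R k)" and F: "psd_mat F"
    and Sbar: "\<And>k. k < T \<Longrightarrow> psd_mat (Sbar k)" and S: "\<And>k. k < T \<Longrightarrow> psd_mat (S k)"
begin

definition seg :: "real \<Rightarrow> nat \<Rightarrow> real^'m^'m" where
  "seg t k = Sbar k + t *\<^sub>R (S k - Sbar k)"

lemma seg_0 [simp]: "seg 0 = Sbar"
  by (simp add: seg_def fun_eq_iff)

lemma psd_seg:
  assumes "t \<in> {0..1}" "k < T" shows "psd_mat (seg t k)"
proof -
  have "seg t k = (1 - t) *\<^sub>R Sbar k + t *\<^sub>R S k" by (simp add: seg_def algebra_simps)
  then show ?thesis using assms Sbar S by (simp add: psd_add psd_scaleR)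
qed

lemma has_matrix_derivative_seg: "((\<lambda>t. seg t k) has_matrix_derivative S k - Sbar k) (at 0 within {0..1})"
  unfolding seg_def by (rule has_matrix_derivative_segment)

lemma psd_Pi_seg: "t \<in> {0..1} \<Longrightarrow> k \<le> T \<Longrightarrow> psd_mat (Pi eps A B R F T (seg t) k)"
  using eps R F psd_seg by (intro psd_Pi) auto

lemma pd_Sig_Q_seg: "t \<in> {0..1} \<Longrightarrow> k < T \<Longrightarrow> pd_mat (Sig_Q eps A B R F T (seg t) k)"
  unfolding Sig_Q_eq_Sig_Q_step using eps R psd_Pi_seg by (intro pd_Sig_Q_step) auto

abbreviation "Pibar \<equiv> Pi eps A B R F T Sbar"
abbreviation "SQbar \<equiv> Sig_Q eps A B R F T Sbar"
abbreviation "Spibar \<equiv> Sig_pi eps A B R F T Sbar"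
abbreviation "Xbar \<equiv> Sig_x eps A B R F Sw Xini T Sbar"

definition "Lbar k = matrix_inv (SQbar k + Sbar k)"
definition "Ebar k = (1/eps) *\<^sub>R (SQbar k ** transpose (B k) ** Pibar (Suc k) ** A k)"
definition "Mbar k = A k + B k ** Pgain eps A B R F T Sbar k"

lemma pd_SQbar: "k < T \<Longrightarrow> pd_mat (SQbar k)"
  using pd_Sig_Q_seg[of 0] by simp

lemma Spibar_eq: "k < T \<Longrightarrow> Spibar k = SQbar k - SQbar k ** Lbar k ** SQbar k"
  unfolding Sig_pi_def Lbar_def Sig_Q_eq_Sig_Q_step
  using eps R Sbar psd_Pi_seg[of 0 "Suc k"] by (intro Sig_pi_step_eq) auto

text \<open>\<open>dPi k\<close> is the derivative of \<open>\<Pi>\<^sub>k\<close> along the segment; like \<open>Pi_rev\<close>, the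
  recursion counts steps backwards from \<open>T\<close>.\<close>

primrec dPi_rev :: "nat \<Rightarrow> real^'n^'n" where
  "dPi_rev 0 = 0"
| "dPi_rev (Suc j) = (let k = T - Suc j in
     transpose (Mbar k) ** dPi_rev j ** Mbar k
     - eps *\<^sub>R (transpose (Ebar k) ** Lbar k ** (S k - Sbar k) ** Lbar k ** Ebar k))"

definition "dPi k = dPi_rev (T - k)"

definition "dSQ k = - (1/eps) *\<^sub>R (SQbar k ** (transpose (B k) ** dPi (Suc k) ** B k) ** SQbar k)"

lemma dPi_T [simp]: "dPi T = 0"
  by (simp add: dPi_def)

lemma dPi_Suc:
  assumes "k < T"
  shows "dPi k = transpose (Mbar k) ** dPi (Suc k) ** Mbar k
    - eps *\<^sub>R (transpose (Ebar k) ** Lbar k ** (S k - Sbar k) ** Lbar k ** Ebar k)"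
proof -
  have "T - k = Suc (T - Suc k)" "T - Suc (T - Suc k) = k" using assms by simp_all
  then show ?thesis by (simp add: dPi_def Let_def)
qed

lemma has_matrix_derivative_Pi:
  "k \<le> T \<Longrightarrow> ((\<lambda>t. Pi eps A B R F T (seg t) k) has_matrix_derivative dPi k) (at 0 within {0..1})"
proof (induction k rule: inc_induct)
  case base
  show ?case by (simp add: Pi_T has_matrix_derivative_const)
next
  case (step k)
  have "((\<lambda>t. Pi_step eps (A k) (B k) (R k) (seg t k) (Pi eps A B R F T (seg t) (Suc k)))
      has_matrix_derivative dPi k) (at 0 within {0..1})"
    using has_matrix_derivative_Pi_step[OF eps R[OF step(2)] psd_Pi_seg psd_seg _ step(3)
        has_matrix_derivative_seg] step(2)
    by (simp add: dPi_Suc Mbar_def Ebar_def Lbar_def Pgain_def Sig_pi_def Sig_Q_eq_Sig_Q_step)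
  then show ?case using step(2) by (simp add: Pi_Suc)
qed

lemma has_matrix_derivative_Sig_Q:
  assumes "k < T"
  shows "((\<lambda>t. Sig_Q eps A B R F T (seg t) k) has_matrix_derivative dSQ k) (at 0 within {0..1})"
proof -
  have "((\<lambda>t. Sig_Q_step eps (B k) (R k) (Pi eps A B R F T (seg t) (Suc k))) has_matrix_derivative
      - (1/eps) *\<^sub>R (Sig_Q_step eps (B k) (R k) (Pi eps A B R F T (seg 0) (Suc k))
          ** (transpose (B k) ** dPi (Suc k) ** B k)
          ** Sig_Q_step eps (B k) (R k) (Pi eps A B R F T (seg 0) (Suc k)))) (at 0 within {0..1})"
    using assms by (intro has_matrix_derivative_Sig_Q_step eps R psd_Pi_seg has_matrix_derivative_Pi) auto
  then show ?thesis by (simp add: Sig_Q_eq_Sig_Q_step dSQ_def)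
qed

lemma has_real_derivative_trace_Pi:
  "k \<le> T \<Longrightarrow> ((\<lambda>t. trace (Pi eps A B R F T (seg t) k ** X)) has_real_derivative trace (dPi k ** X))
    (at 0 within {0..1})"
  by (intro has_real_derivative_trace has_matrix_derivative_mult_right has_matrix_derivative_Pi)

lemma has_real_derivative_ln_det_Sig_Q:
  assumes k: "k < T"
  shows "((\<lambda>t. ln (det (Sig_Q eps A B R F T (seg t) k))) has_real_derivative
      trace (matrix_inv (SQbar k) ** dSQ k)) (at 0 within {0..1})"
  using pd_SQbar[OF k] has_real_derivative_ln_det[OF has_matrix_derivative_Sig_Q[OF k]]
  by (simp add: pd_det_pos)

lemma has_real_derivative_ln_det_seg_Sig_Q:
  assumes k: "k < T"
  shows "((\<lambda>t. ln (det (seg t k + Sig_Q eps A B R F T (seg t) k))) has_real_derivative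
      trace (Lbar k ** (S k - Sbar k + dSQ k))) (at 0 within {0..1})"
proof -
  have "det (seg 0 k + Sig_Q eps A B R F T (seg 0) k) > 0"
    using pd_SQbar[OF k] Sbar[OF k] by (simp add: pd_det_pos psd_add_pd)
  from has_real_derivative_ln_det[OF has_matrix_derivative_add[OF has_matrix_derivative_seg
      has_matrix_derivative_Sig_Q[OF k]] this]
  show ?thesis by (simp add: Lbar_def add.commute)
qed

lemma has_real_derivative_Jcheck:
  "((\<lambda>t. Jcheck eps A B R F Sw Xini T (seg t)) has_real_derivative
     (1/2) * (trace (dPi 0 ** Xini)
       + (\<Sum>k<T. eps * (trace (Lbar k ** (S k - Sbar k + dSQ k)) - trace (matrix_inv (SQbar k) ** dSQ k))
                 + trace (dPi (Suc k) ** Sw k)))) (at 0 within {0..1})"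
proof -
  define SQ where "SQ k t = Sig_Q eps A B R F T (seg t) k" for k t
  define J where "J t = (1/2) * (trace (Pi eps A B R F T (seg t) 0 ** Xini)
       + (\<Sum>k<T. eps * (ln (det (seg t k + SQ k t)) - ln (det (SQ k t)))
                 + trace (Pi eps A B R F T (seg t) (Suc k) ** Sw k)))" for t
  have J: "J t = Jcheck eps A B R F Sw Xini T (seg t)" if "t \<in> {0..1}" for t
  proof -
    have "ln (det (seg t k + SQ k t) / det (SQ k t)) = ln (det (seg t k + SQ k t)) - ln (det (SQ k t))"
      if "k < T" for k
    proof -
      have "pd_mat (SQ k t)" "psd_mat (seg t k)"
        using pd_Sig_Q_seg psd_seg \<open>t \<in> {0..1}\<close> \<open>k < T\<close> by (simp_all add: SQ_def)
      then have "det (SQ k t) > 0" "det (seg t k + SQ k t) > 0"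
        by (simp_all add: pd_det_pos psd_add_pd)
      then show ?thesis by (simp add: ln_div)
    qed
    then show ?thesis by (simp add: Jcheck_def J_def SQ_def)
  qed
  have "(J has_real_derivative (1/2) * (trace (dPi 0 ** Xini)
       + (\<Sum>k<T. eps * (trace (Lbar k ** (S k - Sbar k + dSQ k)) - trace (matrix_inv (SQbar k) ** dSQ k))
                 + trace (dPi (Suc k) ** Sw k)))) (at 0 within {0..1})"
    unfolding J_def SQ_def
    by (intro DERIV_cmult DERIV_add DERIV_sum DERIV_diff has_real_derivative_trace_Pi
        has_real_derivative_ln_det_seg_Sig_Q has_real_derivative_ln_det_Sig_Q) auto
  from has_field_derivative_transform_within[OF this zero_less_one _ J]
  show ?thesis by simp
qed


lemma Xbar_Suc:
  "k < T \<Longrightarrow> Xbar (Suc k) = Mbar k ** Xbar k ** transpose (Mbar k) + B k ** Spibar k ** transpose (B k) + Sw k"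
  by (simp add: Let_def Mbar_def)

lemma trace_dPi_Xbar_step:
  assumes k: "k < T"
  shows "trace (dPi k ** Xbar k) - trace (dPi (Suc k) ** Xbar (Suc k))
     = - trace (dPi (Suc k) ** (B k ** Spibar k ** transpose (B k))) - trace (dPi (Suc k) ** Sw k)
       - eps * trace (Lbar k ** Ebar k ** Xbar k ** transpose (Ebar k) ** Lbar k ** (S k - Sbar k))"
proof -
  define X where "X = Xbar k"
  define P' where "P' = dPi (Suc k)"
  define M where "M = Mbar k"
  define E where "E = Ebar k"
  define L where "L = Lbar k"
  define D where "D = S k - Sbar k"
  have "trace (dPi k ** X) = trace (transpose M ** P' ** M ** X) - eps * trace (transpose E ** L ** D ** L ** E ** X)"
    by (simp add: dPi_Suc[OF k] matrix_diff_rdistrib matrix_scaleR_left trace_sub trace_scaleR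
        M_def P'_def E_def L_def D_def)
  also have "trace (transpose M ** P' ** M ** X) = trace (P' ** M ** X ** transpose M)"
    using trace_mul_sym[of "transpose M" "P' ** M ** X"] by (simp add: matrix_mul_assoc)
  also have "trace (transpose E ** L ** D ** L ** E ** X) = trace (L ** E ** X ** transpose E ** L ** D)"
    using trace_mul_sym[of "transpose E" "L ** D ** L ** E ** X"] trace_mul_sym[of "L ** D" "L ** E ** X ** transpose E"]
    by (simp add: matrix_mul_assoc)
  moreover have "trace (P' ** Xbar (Suc k)) = trace (P' ** M ** X ** transpose M)
      + trace (P' ** (B k ** Spibar k ** transpose (B k))) + trace (P' ** Sw k)"
    unfolding Xbar_Suc[OF k]
    by (simp add: matrix_add_ldistrib trace_add M_def X_def matrix_mul_assoc del: Sig_x.simps(2))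
  ultimately show ?thesis by (simp add: X_def P'_def E_def L_def D_def)
qed

lemma trace_log_det_derivatives:
  assumes k: "k < T"
  shows "eps * (trace (Lbar k ** (S k - Sbar k + dSQ k)) - trace (matrix_inv (SQbar k) ** dSQ k))
     = eps * trace (Lbar k ** (S k - Sbar k)) + trace (dPi (Suc k) ** (B k ** Spibar k ** transpose (B k)))"
proof -
  define SQ where "SQ = SQbar k"
  define L where "L = Lbar k"
  define dG where "dG = transpose (B k) ** dPi (Suc k) ** B k"
  have dSQ: "dSQ k = - (1/eps) *\<^sub>R (SQ ** dG ** SQ)" by (simp add: dSQ_def SQ_def dG_def)
  have "eps * trace (L ** dSQ k) = - trace ((L ** SQ ** dG) ** SQ)"
    using eps by (simp add: dSQ matrix_ring_simps trace_neg trace_scaleR matrix_mul_assoc)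
  also have "\<dots> = - trace (SQ ** L ** SQ ** dG)"
    by (simp add: trace_mul_sym[of _ SQ] matrix_mul_assoc)
  finally have log1: "eps * trace (L ** dSQ k) = - trace (SQ ** L ** SQ ** dG)" .
  have "matrix_inv SQ ** SQ = mat 1"
    unfolding SQ_def using pd_SQbar[OF k] by (intro matrix_inv_left pd_invertible)
  then have "eps * trace (matrix_inv SQ ** dSQ k) = - trace (dG ** SQ)"
    using eps by (simp add: dSQ matrix_ring_simps trace_neg trace_scaleR matrix_mul_assoc)
  then have log2: "eps * trace (matrix_inv SQ ** dSQ k) = - trace (SQ ** dG)"
    by (simp add: trace_mul_sym[of dG])
  have "trace (dPi (Suc k) ** (B k ** Spibar k ** transpose (B k))) = trace (Spibar k ** dG)"
    using trace_mul_sym[of "dPi (Suc k) ** B k ** Spibar k" "transpose (B k)"]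
      trace_mul_sym[of "Spibar k" dG]
    by (simp add: dG_def matrix_mul_assoc)
  also have "\<dots> = trace (SQ ** dG) - trace (SQ ** L ** SQ ** dG)"
    by (simp add: Spibar_eq[OF k] SQ_def L_def matrix_diff_rdistrib trace_sub)
  finally have log3: "trace (dPi (Suc k) ** (B k ** Spibar k ** transpose (B k)))
      = trace (SQ ** dG) - trace (SQ ** L ** SQ ** dG)" .
  have "eps * (trace (L ** (S k - Sbar k + dSQ k)) - trace (matrix_inv SQ ** dSQ k))
      = eps * trace (L ** (S k - Sbar k)) + eps * trace (L ** dSQ k) - eps * trace (matrix_inv SQ ** dSQ k)"
    by (simp add: matrix_add_ldistrib trace_add distrib_left right_diff_distrib)
  then show ?thesis using log1 log2 log3 by (simp add: SQ_def L_def)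
qed

lemma trace_Jprime:
  assumes k: "k < T"
  shows "trace (Jprime eps A B R F Sw Xini T Sbar k ** (S k - Sbar k))
     = (eps/2) * (trace (Lbar k ** (S k - Sbar k))
         - trace (Lbar k ** Ebar k ** Xbar k ** transpose (Ebar k) ** Lbar k ** (S k - Sbar k)))"
proof -
  have "Lbar k ** (SQbar k + Sbar k) = mat 1"
    unfolding Lbar_def using pd_SQbar[OF k] Sbar[OF k] by (intro matrix_inv_left pd_invertible pd_add_psd)
  then have "Lbar k ** (Sbar k + SQbar k - Ebar k ** Xbar k ** transpose (Ebar k)) ** Lbar k
      = Lbar k - Lbar k ** Ebar k ** Xbar k ** transpose (Ebar k) ** Lbar k"
    by (simp add: matrix_ring_simps add.commute matrix_mul_assoc)
  moreover have "Jprime eps A B R F Sw Xini T Sbar k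
      = (eps/2) *\<^sub>R (Lbar k ** (Sbar k + SQbar k - Ebar k ** Xbar k ** transpose (Ebar k)) ** Lbar k)"
    by (simp add: Jprime_def Let_def Lbar_def Ebar_def)
  ultimately show ?thesis
    by (simp add: matrix_scaleR_left trace_scaleR matrix_diff_rdistrib trace_sub matrix_mul_assoc)
qed

lemma has_real_derivative_Jcheck_Jprime:
  "((\<lambda>t. Jcheck eps A B R F Sw Xini T (seg t)) has_real_derivative
     (\<Sum>k<T. trace (Jprime eps A B R F Sw Xini T Sbar k ** (S k - Sbar k)))) (at 0 within {0..1})"
proof -
  define tele where "tele k = trace (dPi k ** Xbar k) - trace (dPi (Suc k) ** Xbar (Suc k))" for k
  define log_and_noise where "log_and_noise k =
      eps * (trace (Lbar k ** (S k - Sbar k + dSQ k)) - trace (matrix_inv (SQbar k) ** dSQ k))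
      + trace (dPi (Suc k) ** Sw k)" for k
  have "trace (dPi 0 ** Xini) = (\<Sum>k<T. tele k)"
    using sum_lessThan_telescope'[of "\<lambda>k. trace (dPi k ** Xbar k)" T]
    by (simp add: tele_def del: Sig_x.simps(2))
  then have "(1/2) * (trace (dPi 0 ** Xini) + (\<Sum>k<T. log_and_noise k))
      = (1/2) * (\<Sum>k<T. tele k + log_and_noise k)"
    by (simp add: sum.distrib)
  also have "\<dots> = (\<Sum>k<T. trace (Jprime eps A B R F Sw Xini T Sbar k ** (S k - Sbar k)))"
  proof -
    have "tele k + log_and_noise k = 2 * trace (Jprime eps A B R F Sw Xini T Sbar k ** (S k - Sbar k))"
      if "k < T" for k
    proof -
      have "tele k + log_and_noise k = eps * trace (Lbar k ** (S k - Sbar k))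
          - eps * trace (Lbar k ** Ebar k ** Xbar k ** transpose (Ebar k) ** Lbar k ** (S k - Sbar k))"
        unfolding tele_def log_and_noise_def trace_dPi_Xbar_step[OF that] trace_log_det_derivatives[OF that]
        by linarith
      then show ?thesis unfolding trace_Jprime[OF that] by (simp add: algebra_simps)
    qed
    then show ?thesis by (simp add: sum_distrib_left)
  qed
  finally show ?thesis using has_real_derivative_Jcheck by (simp add: log_and_noise_def)
qed

end

theorem lemma5:
  fixes eps :: real and T :: nat
    and A :: "nat \<Rightarrow> real^'n^'n" and B :: "nat \<Rightarrow> real^'m^'n"
    and R :: "nat \<Rightarrow> real^'m^'m" and Sw :: "nat \<Rightarrow> real^'n^'n"
    and F Xini :: "real^'n^'n"
    and Sbar S :: "nat \<Rightarrow> real^'m^'m"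
  assumes "T \<ge> 1" and "eps > 0"
    and "\<And>k. k < T \<Longrightarrow> pd_mat (R k)"
    and "\<And>k. k < T \<Longrightarrow> pd_mat (Sw k)"
    and "psd_mat F" and "psd_mat Xini"
    and "\<And>k. k < T \<Longrightarrow> psd_mat (Sbar k)"
    and "\<And>k. k < T \<Longrightarrow> psd_mat (S k)"
  shows "((\<lambda>t. (Jcheck eps A B R F Sw Xini T (\<lambda>k. Sbar k + t *\<^sub>R (S k - Sbar k))
                 - Jcheck eps A B R F Sw Xini T Sbar) / t)
          \<longlongrightarrow> (\<Sum>k<T. trace (Jprime eps A B R F Sw Xini T Sbar k ** (S k - Sbar k))))
         (at_right 0)"
proof -
  interpret lq_segment eps A B R F T Sw Xini Sbar S
    using assms by unfold_locales auto
  have "at (0::real) within {0..1} = at_right 0"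
    by (rule at_within_Icc_at_right) simp
  then show ?thesis
    using has_real_derivative_Jcheck_Jprime
    by (simp add: has_field_derivative_iff seg_def[abs_def])
qed

end
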